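(* Let $\sigma, \tau \in \mathrm{Perm}(S)$. Set $S' = S \setminus \mathrm{supp}(\tau)$. Let $\pi' \in \mathrm{Perm}(S')$, and let $\pi$ be the permutation with $\pi|_{\mathrm{supp}(\tau)} = \tau$ and $\pi|_{S'} = \pi'$. Let $\mathbf{Z} \in M_N(\mathbb{C})^S$. If $S' = \varnothing$, then $\prod_{\gamma \in \mathrm{Cyc}(\pi \sigma)} \mathrm{tr}_N(\prod_{k \in \gamma} Z_k) = \prod_{\gamma \in \mathrm{Cyc}(\tau \sigma)} \mathrm{tr}_N(\prod_{k \in \gamma} Z_k) = \lambda_{\sigma,\tau}$. Otherwise, we have \[ \prod_{\gamma \in \mathrm{Cyc}(\pi \sigma)} \mathrm{tr}_N \left( \prod_{k \in \gamma} Z_k \right) = \prod_{\gamma \in \mathrm{Cyc}(\pi'(\sigma \ominus \tau))} \mathrm{tr}_N \left( \prod_{k \in \gamma} Z_k^{\tau,\sigma} \right). \]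
   Context: $S \subseteq \mathbb{N}$ is a finite set, $\mathrm{Perm}(S)$ the permutations of $S$, $\mathrm{supp}(\sigma)=\{k: \sigma(k)\neq k\}$, and $\mathrm{Cyc}(\sigma)$ the set of cycles of $\sigma$ (nontrivial cycles together with fixed points, each fixed point viewed as a trivial cycle). $M_N(\mathbb{C})$ is the algebra of $N\times N$ complex matrices and $\mathrm{tr}_N = \frac1N \mathrm{Tr}$. For a cycle $\gamma$ written as $(k_1 \dots k_m)$ with $k_1 = \min \mathrm{supp}(\gamma)$, $\prod_{k \in \gamma} x_k := x_{k_1}\cdots x_{k_m}$; for a fixed point $j$, $\prod_{k\in\gamma} x_k := x_j$. For $\sigma,\tau \in \mathrm{Perm}(S)$, $\sigma \ominus \tau \in \mathrm{Perm}(S \setminus \mathrm{supp}(\tau))$ is defined by $(\sigma\ominus\tau)(k) = (\tau\sigma)^{r(k)}(k)$, where $r(k)\ge 1$ is the smallest index with $(\tau\sigma)^{r(k)}(k) \notin \mathrm{supp}(\tau)$. The $(\sigma,\tau)$-reduction $\mathbf{Z}^{\sigma,\tau} \in M_N(\mathbb{C})^{S\setminus \mathrm{supp}(\tau)}$ of $\mathbf{Z} = (Z_k)_{k\in S}$ (written $Z_k^{\tau,\sigma}$ in the claim): for $j \in S \setminus \mathrm{supp}(\tau)$, with $r(j)\ge1$ the first index such that $(\tau\sigma)^{r(j)}(j)\notin \mathrm{supp}(\tau)$, set $Z_j^{\sigma,\tau} = Z_j Z_{(\tau\sigma)(j)} \cdots Z_{(\tau\sigma)^{r(j)-1}(j)}$.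 Let the scalar $\lambda_{\sigma,\tau} = \prod_{\gamma \in \mathrm{Cyc}(\tau\sigma),\ \mathrm{supp}(\gamma)\subseteq \mathrm{supp}(\tau)} \mathrm{tr}_N(\prod_{k\in\gamma} Z_k)$ (the product over cycles of $\tau\sigma$, possibly fixed points, contained in $\mathrm{supp}(\tau)$); then the value of $Z^{\sigma,\tau}_m$ for $m = \min(S\setminus\mathrm{supp}(\tau))$ is additionally multiplied by $\lambda_{\sigma,\tau}$. If $\mathrm{supp}(\tau) = S$, all cycles of $\tau\sigma$ contribute to $\lambda_{\sigma,\tau}$. *)

theory Defs
  imports "HOL-Analysis.Analysis" "HOL-Combinatorics.Permutations"
begin

text \<open>Permutations of a finite S (subset of nat) are functions f with f permutes S.
  Composition tau sigma means tau o sigma (sigma applied first).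
  Matrices in M_N(C) are complex^'n^'n with N = CARD('n).\<close>

definition psupp :: "(nat \<Rightarrow> nat) \<Rightarrow> nat set" where
  "psupp f = {k. f k \<noteq> k}"

definition cyc_of :: "(nat \<Rightarrow> nat) \<Rightarrow> nat \<Rightarrow> nat set" where
  "cyc_of p k = {(p ^^ i) k | i. True}"

text \<open>Cyc(p) for p a permutation of S: all cycles including fixed points.\<close>
definition Cyc :: "(nat \<Rightarrow> nat) \<Rightarrow> nat set \<Rightarrow> nat set set" where
  "Cyc p S = cyc_of p ` S"

definition cyc_word :: "(nat \<Rightarrow> nat) \<Rightarrow> nat set \<Rightarrow> nat list" where
  "cyc_word p C = map (\<lambda>i. (p ^^ i) (Min C)) [0..<card C]"

definition mprod_list :: "('a::comm_ring_1^'n^'n) list \<Rightarrow> 'a^'n^'n" where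
  "mprod_list xs = foldr (\<lambda>A B. A ** B) xs (mat 1)"

definition trN :: "complex^'n^'n \<Rightarrow> complex" where
  "trN A = trace A / of_nat CARD('n)"

definition cyc_tr :: "(nat \<Rightarrow> nat) \<Rightarrow> (nat \<Rightarrow> complex^'n^'n) \<Rightarrow> nat set \<Rightarrow> complex" where
  "cyc_tr p Z C = trN (mprod_list (map Z (cyc_word p C)))"

definition cyc_trace_prod :: "(nat \<Rightarrow> nat) \<Rightarrow> nat set \<Rightarrow> (nat \<Rightarrow> complex^'n^'n) \<Rightarrow> complex" where
  "cyc_trace_prod p S Z = (\<Prod>C\<in>Cyc p S. cyc_tr p Z C)"

definition ret :: "(nat \<Rightarrow> nat) \<Rightarrow> (nat \<Rightarrow> nat) \<Rightarrow> nat \<Rightarrow> nat" where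
  "ret \<sigma> \<tau> k = (LEAST r. 1 \<le> r \<and> ((\<tau> \<circ> \<sigma>) ^^ r) k \<notin> psupp \<tau>)"

definition pominus :: "(nat \<Rightarrow> nat) \<Rightarrow> (nat \<Rightarrow> nat) \<Rightarrow> nat \<Rightarrow> nat" where
  "pominus \<sigma> \<tau> k = (if k \<in> psupp \<tau> then k else ((\<tau> \<circ> \<sigma>) ^^ ret \<sigma> \<tau> k) k)"

definition lam :: "nat set \<Rightarrow> (nat \<Rightarrow> nat) \<Rightarrow> (nat \<Rightarrow> nat) \<Rightarrow> (nat \<Rightarrow> complex^'n^'n) \<Rightarrow> complex" where
  "lam S \<sigma> \<tau> Z = (\<Prod>C\<in>{C \<in> Cyc (\<tau> \<circ> \<sigma>) S. C \<subseteq> psupp \<tau>}. cyc_tr (\<tau> \<circ> \<sigma>) Z C)"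

text \<open>The (sigma,tau)-reduction of Z (meaningful on S minus supp(tau)).\<close>
definition reduction :: "nat set \<Rightarrow> (nat \<Rightarrow> nat) \<Rightarrow> (nat \<Rightarrow> nat) \<Rightarrow> (nat \<Rightarrow> complex^'n^'n)
    \<Rightarrow> nat \<Rightarrow> complex^'n^'n" where
  "reduction S \<sigma> \<tau> Z j =
     (if j = Min (S - psupp \<tau>) then mat (lam S \<sigma> \<tau> Z) else mat 1) **
     mprod_list (map (\<lambda>i. Z (((\<tau> \<circ> \<sigma>) ^^ i) j)) [0..<ret \<sigma> \<tau> j])"

end

theory Submission
  imports Defs "HOL-Combinatorics.Orbits"
begin

(* Since \<pi>' fixes supp \<tau> and \<tau> fixes S' = S - supp \<tau>, the glued permutation \<pi> is
   \<tau> \<circ> \<pi>', so \<pi>\<sigma> = \<tau>\<pi>'\<sigma>.  A cycle of \<pi>\<sigma> that avoids S' runs inside supp \<tau>, where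
   \<pi>\<sigma> agrees with \<tau>\<sigma>; these cycles are exactly the cycles of \<tau>\<sigma> inside supp \<tau> and
   together give \<lambda>.  On S', the map \<pi>'(\<sigma> \<ominus> \<tau>) is the first-return map of \<pi>\<sigma>, and the
   word of a cycle of \<pi>\<sigma> through j \<in> S' is the concatenation of the excursions between
   successive returns, each excursion being a block of the reduction.  So the traces agree
   cycle by cycle, the scalar \<lambda> being carried by the cycle through min S'. *)

section \<open>Products of matrix words\<close>

lemma mprod_list_Nil [simp]: "mprod_list [] = mat 1"
  by (simp add: mprod_list_def)

lemma mprod_list_Cons [simp]: "mprod_list (A # As) = A ** mprod_list As"
  by (simp add: mprod_list_def)

lemma mprod_list_append [simp]: "mprod_list (As @ Bs) = mprod_list As ** mprod_list Bs"
  by (induction As) (simp_all add: matrix_mul_assoc)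

lemma trace_mprod_list_rotate:
  "trace (mprod_list (rotate k As)) = trace (mprod_list (As :: ('a::comm_ring_1^'n^'n) list))"
proof (induction k)
  case (Suc k)
  have "trace (mprod_list (rotate1 Bs)) = trace (mprod_list Bs)" for Bs :: "('a^'n^'n) list"
  proof (cases Bs)
    case (Cons B Cs)
    then show ?thesis by (simp add: trace_mul_sym[of "mprod_list Cs"])
  qed simp
  with Suc show ?case by simp
qed simp

lemma mat_matrix_mult_nth: "(mat c ** A) $ i $ j = c * (A $ i $ j :: 'a::comm_ring_1)"
  by (simp add: matrix_matrix_mult_def mat_def if_distrib[where f="\<lambda>u. u * _"] cong: if_cong)

lemma matrix_mat_mult_nth: "(A ** mat c) $ i $ j = (A $ i $ j :: 'a::comm_ring_1) * c"
  by (simp add: matrix_matrix_mult_def mat_def if_distrib[where f="\<lambda>u. _ * u"] cong: if_cong)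

lemma matrix_mat_mult_commute: "(A :: 'a::comm_ring_1^'n^'n) ** mat c = mat c ** A"
  by (simp add: vec_eq_iff mat_matrix_mult_nth matrix_mat_mult_nth mult.commute)

lemma mat_mult_mat: "mat a ** mat b = (mat (a * b) :: 'a::comm_ring_1^'n^'n)"
  by (simp add: vec_eq_iff mat_matrix_mult_nth) (simp add: mat_def)

lemma mprod_list_map_mat_mult:
  "mprod_list (map (\<lambda>x. mat (c x) ** W x) xs)
     = mat (prod_list (map c xs)) ** mprod_list (map (W :: _ \<Rightarrow> 'a::comm_ring_1^'n^'n) xs)"
proof (induction xs)
  case (Cons x xs)
  let ?c = "prod_list (map c xs)"
  have "mat (c x) ** W x ** (mat ?c ** mprod_list (map W xs))
      = mat (c x) ** (W x ** mat ?c) ** mprod_list (map W xs)"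
    by (simp add: matrix_mul_assoc)
  also have "\<dots> = mat (c x) ** mat ?c ** (W x ** mprod_list (map W xs))"
    by (simp add: matrix_mat_mult_commute[of "W x"] matrix_mul_assoc)
  finally show ?case using Cons by (simp add: mat_mult_mat)
qed simp

lemma trN_mat_mult: "trN (mat a ** M) = a * trN M"
  by (simp add: trN_def trace_def mat_matrix_mult_nth sum_distrib_left)

section \<open>Cycles through periodic points\<close>

definition orbit_word :: "('a \<Rightarrow> 'a) \<Rightarrow> 'a \<Rightarrow> nat \<Rightarrow> 'a list" where
  "orbit_word q x n = map (\<lambda>i. (q ^^ i) x) [0..<n]"

lemma length_orbit_word [simp]: "length (orbit_word q x n) = n"
  by (simp add: orbit_word_def)

lemma orbit_word_0 [simp]: "orbit_word q x 0 = []"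
  by (simp add: orbit_word_def)

lemma orbit_word_Suc: "orbit_word q x (Suc n) = orbit_word q x n @ [(q ^^ n) x]"
  by (simp add: orbit_word_def)

lemma orbit_word_add: "orbit_word q x (m + n) = orbit_word q x m @ orbit_word q ((q ^^ m) x) n"
  by (induction n) (simp_all add: orbit_word_Suc, metis add.commute comp_apply funpow_add)

lemma orbit_word_rotate:
  assumes "(q ^^ n) x = x" "k < n"
  shows "orbit_word q ((q ^^ k) x) n = rotate k (orbit_word q x n)"
proof (rule nth_equalityI)
  fix i assume "i < length (orbit_word q ((q ^^ k) x) n)"
  then have "i < n" by simp
  then have "rotate k (orbit_word q x n) ! i = (q ^^ ((k + i) mod n)) x"
    using assms(2) by (simp add: nth_rotate orbit_word_def)
  also have "\<dots> = (q ^^ (i + k)) x"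
    using funpow_mod_eq[of n q x "k + i"] assms(1) by (simp add: add.commute)
  finally show "orbit_word q ((q ^^ k) x) n ! i = rotate k (orbit_word q x n) ! i"
    using \<open>i < n\<close> by (simp add: orbit_word_def funpow_add)
qed simp

lemma funpow_in_cyc_of: "(q ^^ i) x \<in> cyc_of q x"
  by (auto simp: cyc_of_def)

lemma self_in_cyc_of: "x \<in> cyc_of q x"
  using funpow_in_cyc_of[of 0] by simp

lemma cyc_of_cong: "(\<And>i. (f ^^ i) x = (g ^^ i) x) \<Longrightarrow> cyc_of f x = cyc_of g x"
  by (simp add: cyc_of_def)

lemma cyc_of_subset: "z \<in> cyc_of q x \<Longrightarrow> cyc_of q z \<subseteq> cyc_of q x"
  unfolding cyc_of_def by (auto, metis comp_apply funpow_add)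

lemma cyc_of_subset_invariant:
  assumes "\<And>y. y \<in> A \<Longrightarrow> q y \<in> A" "x \<in> A"
  shows "cyc_of q x \<subseteq> A"
proof -
  have "(q ^^ i) x \<in> A" for i
    by (induction i) (simp_all add: assms)
  then show ?thesis by (auto simp: cyc_of_def)
qed

(* Periodic points y of q are encoded as y \<in> orbit q y: orbit omits the zeroth iterate. *)
lemma cyc_of_eq_orbit: "y \<in> orbit q y \<Longrightarrow> cyc_of q y = orbit q y"
  unfolding cyc_of_def by (rule orbit_altdef_self_in[symmetric])

lemma cyc_of_conv_funpow_dist1:
  assumes "y \<in> orbit q y"
  shows "cyc_of q y = (\<lambda>n. (q ^^ n) y) ` {0..<funpow_dist1 q y y}"
  using cyc_of_eq_orbit[OF assms] orbit_conv_funpow_dist1[OF assms] by simp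

lemma card_cyc_of:
  assumes "y \<in> orbit q y"
  shows "card (cyc_of q y) = funpow_dist1 q y y"
  unfolding cyc_of_conv_funpow_dist1[OF assms] card_image[OF inj_on_funpow_dist1[OF assms]] by simp

lemma card_cyc_of_pos: "y \<in> orbit q y \<Longrightarrow> 0 < card (cyc_of q y)"
  by (simp add: card_cyc_of)

lemma funpow_card_cyc_of: "y \<in> orbit q y \<Longrightarrow> (q ^^ card (cyc_of q y)) y = y"
  by (metis card_cyc_of funpow_dist1_prop)

lemma card_cyc_of_le: "y \<in> orbit q y \<Longrightarrow> 0 < k \<Longrightarrow> (q ^^ k) y = y \<Longrightarrow> card (cyc_of q y) \<le> k"
  by (metis card_cyc_of funpow_dist1_le_self)

lemma set_orbit_word_card_cyc_of:
  assumes "y \<in> orbit q y"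
  shows "set (orbit_word q y (card (cyc_of q y))) = cyc_of q y"
  unfolding orbit_word_def set_map set_upt card_cyc_of[OF assms]
  by (rule cyc_of_conv_funpow_dist1[OF assms, symmetric])

lemma distinct_orbit_word_card_cyc_of:
  assumes "y \<in> orbit q y"
  shows "distinct (orbit_word q y (card (cyc_of q y)))"
  using inj_on_funpow_dist1[OF assms]
  by (simp only: orbit_word_def distinct_map card_cyc_of[OF assms] set_upt distinct_upt simp_thms)

lemma cyc_of_eq:
  assumes "y \<in> orbit q y" "z \<in> cyc_of q y"
  shows "cyc_of q z = cyc_of q y" "z \<in> orbit q z"
proof -
  have "z \<in> orbit q y" using assms by (simp add: cyc_of_eq_orbit)
  then show "z \<in> orbit q z" using assms(1) by (rule self_in_orbit_trans[rotated])
  then show "cyc_of q z = cyc_of q y"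
    using assms(1) \<open>z \<in> orbit q y\<close>
    by (auto simp: cyc_of_eq_orbit intro: orbit_trans orbit_swap)
qed

lemma cyc_tr_cyc_of:
  assumes "y \<in> orbit q y"
  shows "cyc_tr q Z (cyc_of q y) = trN (mprod_list (map Z (orbit_word q y (card (cyc_of q y)))))"
proof -
  let ?C = "cyc_of q y" and ?n = "card (cyc_of q y)"
  have "Min ?C \<in> set (orbit_word q y ?n)"
    using assms card_cyc_of_pos[OF assms] set_orbit_word_card_cyc_of[OF assms]
    by (metis Min_in card_gt_0_iff)
  then obtain k where k: "k < ?n" "Min ?C = (q ^^ k) y"
    by (auto simp: orbit_word_def)
  have "cyc_word q ?C = orbit_word q (Min ?C) ?n"
    by (simp add: cyc_word_def orbit_word_def)
  also have "\<dots> = rotate k (orbit_word q y ?n)"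
    using k orbit_word_rotate[OF funpow_card_cyc_of[OF assms]] by simp
  finally show ?thesis
    by (simp add: cyc_tr_def trN_def flip: rotate_map) (simp add: trace_mprod_list_rotate)
qed

lemma cyc_tr_mat_mult:
  assumes "y \<in> orbit q y"
  shows "cyc_tr q (\<lambda>x. mat (c x) ** W x) (cyc_of q y) = (\<Prod>x\<in>cyc_of q y. c x) * cyc_tr q W (cyc_of q y)"
  using assms
  by (simp add: cyc_tr_cyc_of mprod_list_map_mat_mult trN_mat_mult
      prod.distinct_set_conv_list[symmetric] distinct_orbit_word_card_cyc_of
      set_orbit_word_card_cyc_of)

lemma cyc_trace_prod_mat_mult:
  assumes periodic: "\<And>y. y \<in> A \<Longrightarrow> y \<in> orbit q y" and invariant: "\<And>y. y \<in> A \<Longrightarrow> q y \<in> A"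
  shows "cyc_trace_prod q A (\<lambda>x. mat (c x) ** W x) = (\<Prod>x\<in>A. c x) * cyc_trace_prod q A W"
proof -
  have "(\<Prod>x\<in>A. c x) = (\<Prod>C\<in>Cyc q A. \<Prod>x\<in>C. c x)"
  proof -
    have "cyc_of q y \<subseteq> A" if "y \<in> A" for y
      using invariant that by (rule cyc_of_subset_invariant)
    then have "\<Union> (Cyc q A) = A"
      unfolding Cyc_def using self_in_cyc_of by blast
    moreover have "\<forall>C\<in>Cyc q A. finite C"
      using periodic by (auto simp: Cyc_def cyc_of_eq_orbit finite_orbit)
    moreover have "\<forall>C\<in>Cyc q A. \<forall>C'\<in>Cyc q A. C \<noteq> C' \<longrightarrow> C \<inter> C' = {}"
    proof (intro ballI impI)
      fix C C' assume "C \<in> Cyc q A" "C' \<in> Cyc q A" "C \<noteq> C'"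
      then obtain y y' where "y \<in> A" "y' \<in> A" "C = cyc_of q y" "C' = cyc_of q y'"
        by (auto simp: Cyc_def)
      then show "C \<inter> C' = {}"
        using \<open>C \<noteq> C'\<close> cyc_of_eq(1)[OF periodic] by (metis disjoint_iff)
    qed
    ultimately show ?thesis
      using prod.Union_disjoint[of "Cyc q A" c] by simp
  qed
  moreover have "cyc_trace_prod q A (\<lambda>x. mat (c x) ** W x)
      = (\<Prod>C\<in>Cyc q A. (\<Prod>x\<in>C. c x) * cyc_tr q W C)"
    unfolding cyc_trace_prod_def by (rule prod.cong) (auto simp: Cyc_def cyc_tr_mat_mult periodic)
  ultimately show ?thesis
    by (simp add: prod.distrib cyc_trace_prod_def)
qed

section \<open>First-return maps\<close>

lemma strict_mono_bracket:
  fixes f :: "nat \<Rightarrow> nat"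
  assumes "strict_mono f" "f 0 = 0"
  obtains k where "f k \<le> i" "i < f (Suc k)"
proof -
  have "\<exists>k. f k \<le> i \<and> i < f (Suc k)"
  proof (induction i)
    case 0
    then show ?case using assms strict_monoD[OF assms(1), of 0 1] by auto
  next
    case (Suc i)
    then obtain k where k: "f k \<le> i" "i < f (Suc k)" by blast
    show ?case
    proof (cases "Suc i < f (Suc k)")
      case False
      then have "f (Suc k) = Suc i" using k(2) by simp
      then show ?thesis
        using strict_monoD[OF assms(1), of "Suc k" "Suc (Suc k)"] by (intro exI[of _ "Suc k"]) auto
    qed (use k in \<open>auto intro: exI[of _ k]\<close>)
  qed
  then show ?thesis using that by blast
qed

locale first_return =
  fixes p \<rho> :: "nat \<Rightarrow> nat" and A :: "nat set" and r :: "nat \<Rightarrow> nat"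
  assumes permutation: "permutation p"
    and first_return_pos: "j \<in> A \<Longrightarrow> 0 < r j"
    and funpow_first_return: "j \<in> A \<Longrightarrow> (p ^^ r j) j = \<rho> j"
    and first_return_in: "j \<in> A \<Longrightarrow> \<rho> j \<in> A"
    and no_early_return: "j \<in> A \<Longrightarrow> 0 < i \<Longrightarrow> i < r j \<Longrightarrow> (p ^^ i) j \<notin> A"
begin

definition return_time :: "nat \<Rightarrow> nat \<Rightarrow> nat" where
  "return_time j k = (\<Sum>i<k. r ((\<rho> ^^ i) j))"

definition excursion_prod :: "(nat \<Rightarrow> 'a::comm_ring_1^'n^'n) \<Rightarrow> nat \<Rightarrow> 'a^'n^'n" where
  "excursion_prod Z y = mprod_list (map Z (orbit_word p y (r y)))"

lemma return_time_0 [simp]: "return_time j 0 = 0"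
  by (simp add: return_time_def)

lemma return_time_Suc: "return_time j (Suc k) = return_time j k + r ((\<rho> ^^ k) j)"
  by (simp add: return_time_def)

lemma funpow_first_return_in: "j \<in> A \<Longrightarrow> (\<rho> ^^ k) j \<in> A"
  by (induction k) (simp_all add: first_return_in)

lemma funpow_return_time: "j \<in> A \<Longrightarrow> (p ^^ return_time j k) j = (\<rho> ^^ k) j"
proof (induction k)
  case (Suc k)
  have "(p ^^ return_time j (Suc k)) j = (p ^^ r ((\<rho> ^^ k) j)) ((p ^^ return_time j k) j)"
    by (simp add: return_time_Suc add.commute[of "return_time j k"] funpow_add)
  with Suc show ?case by (simp add: funpow_first_return funpow_first_return_in)
qed simp

lemma strict_mono_return_time: "j \<in> A \<Longrightarrow> strict_mono (return_time j)"
  by (rule strict_monoI_Suc) (simp add: return_time_Suc first_return_pos funpow_first_return_in)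

lemma in_A_at_return_time:
  assumes "j \<in> A" "(p ^^ i) j \<in> A"
  obtains k where "i = return_time j k"
proof -
  obtain k where k: "return_time j k \<le> i" "i < return_time j (Suc k)"
    using strict_mono_bracket[OF strict_mono_return_time[OF assms(1)]] by auto
  have "(p ^^ (i - return_time j k)) ((\<rho> ^^ k) j) = (p ^^ (i - return_time j k + return_time j k)) j"
    by (simp add: funpow_add funpow_return_time[OF assms(1)])
  then have "(p ^^ i) j = (p ^^ (i - return_time j k)) ((\<rho> ^^ k) j)"
    using k(1) by simp
  have "\<not> 0 < i - return_time j k"
  proof
    assume "0 < i - return_time j k"
    moreover have "i - return_time j k < r ((\<rho> ^^ k) j)"
      using k by (simp add: return_time_Suc)
    ultimately have "(p ^^ (i - return_time j k)) ((\<rho> ^^ k) j) \<notin> A"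
      by (rule no_early_return[OF funpow_first_return_in[OF assms(1)]])
    with \<open>(p ^^ i) j = _\<close> assms(2) show False by simp
  qed
  then have "i = return_time j k" using k(1) by simp
  then show ?thesis by (rule that)
qed

lemma return_time_period:
  assumes "j \<in> A"
  obtains k where "0 < k" "card (cyc_of p j) = return_time j k" "(\<rho> ^^ k) j = j"
proof -
  have periodic: "j \<in> orbit p j" by (rule permutation_self_in_orbit[OF permutation])
  then obtain k where k: "card (cyc_of p j) = return_time j k"
    using in_A_at_return_time[OF assms] funpow_card_cyc_of assms by metis
  then have "0 < k" using card_cyc_of_pos[OF periodic] by (cases k) auto
  moreover have "(\<rho> ^^ k) j = j"
    using funpow_return_time[OF assms, of k] funpow_card_cyc_of[OF periodic] k by simp
  ultimately show ?thesis using k that by blast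
qed

lemma periodic_first_return: "j \<in> A \<Longrightarrow> j \<in> orbit \<rho> j"
  by (erule return_time_period) (force simp: orbit_altdef)

lemma cyc_of_first_return:
  assumes "j \<in> A"
  shows "cyc_of \<rho> j = cyc_of p j \<inter> A"
proof
  show "cyc_of \<rho> j \<subseteq> cyc_of p j \<inter> A"
    using funpow_return_time[OF assms] funpow_first_return_in[OF assms]
    by (auto simp: cyc_of_def) metis
  show "cyc_of p j \<inter> A \<subseteq> cyc_of \<rho> j"
  proof
    fix x assume "x \<in> cyc_of p j \<inter> A"
    then obtain i where "x = (p ^^ i) j" "(p ^^ i) j \<in> A" by (auto simp: cyc_of_def)
    then show "x \<in> cyc_of \<rho> j"
      using in_A_at_return_time[OF assms] funpow_return_time[OF assms] funpow_in_cyc_of by metis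
  qed
qed

lemma return_time_card_cyc_of:
  assumes "j \<in> A"
  shows "return_time j (card (cyc_of \<rho> j)) = card (cyc_of p j)"
proof (rule antisym)
  have periodic: "j \<in> orbit p j" by (rule permutation_self_in_orbit[OF permutation])
  have periodic_\<rho>: "j \<in> orbit \<rho> j" by (rule periodic_first_return[OF assms])
  obtain k where k: "0 < k" "card (cyc_of p j) = return_time j k" "(\<rho> ^^ k) j = j"
    using return_time_period[OF assms] .
  have "card (cyc_of \<rho> j) \<le> k" using card_cyc_of_le[OF periodic_\<rho> k(1,3)] .
  then show "return_time j (card (cyc_of \<rho> j)) \<le> card (cyc_of p j)"
    using k(2) strict_mono_less_eq[OF strict_mono_return_time[OF assms]] by simp
  have "0 < return_time j (card (cyc_of \<rho> j))"
    using card_cyc_of_pos[OF periodic_\<rho>] strict_mono_less[OF strict_mono_return_time[OF assms]]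
    by (metis return_time_0)
  moreover have "(p ^^ return_time j (card (cyc_of \<rho> j))) j = j"
    using funpow_return_time[OF assms] funpow_card_cyc_of[OF periodic_\<rho>] by simp
  ultimately show "card (cyc_of p j) \<le> return_time j (card (cyc_of \<rho> j))"
    by (rule card_cyc_of_le[OF periodic])
qed

lemma mprod_list_orbit_word_return_time:
  assumes "j \<in> A"
  shows "mprod_list (map Z (orbit_word p j (return_time j k)))
           = mprod_list (map (excursion_prod Z) (orbit_word \<rho> j k))"
proof (induction k)
  case (Suc k)
  have "orbit_word p j (return_time j (Suc k))
      = orbit_word p j (return_time j k) @ orbit_word p ((\<rho> ^^ k) j) (r ((\<rho> ^^ k) j))"
    by (simp add: return_time_Suc orbit_word_add funpow_return_time[OF assms])
  with Suc show ?case
    by (simp add: orbit_word_Suc excursion_prod_def)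
qed simp

lemma cyc_tr_first_return:
  assumes "j \<in> A"
  shows "cyc_tr \<rho> (excursion_prod Z) (cyc_of \<rho> j) = cyc_tr p Z (cyc_of p j)"
  using mprod_list_orbit_word_return_time[OF assms, of Z "card (cyc_of \<rho> j)"]
  by (simp add: cyc_tr_cyc_of periodic_first_return[OF assms] permutation_self_in_orbit[OF permutation]
      return_time_card_cyc_of[OF assms])

lemma cyc_trace_prod_first_return:
  "cyc_trace_prod \<rho> A (excursion_prod Z) = (\<Prod>C\<in>cyc_of p ` A. cyc_tr p Z C)"
proof -
  have Cyc_\<rho>: "Cyc \<rho> A = (\<lambda>C. C \<inter> A) ` cyc_of p ` A"
    unfolding Cyc_def image_image using cyc_of_first_return by (rule image_cong[OF refl])
  have "inj_on (\<lambda>C. C \<inter> A) (cyc_of p ` A)"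
  proof (rule inj_onI, clarify)
    fix j j' assume "j \<in> A" "j' \<in> A" "cyc_of p j \<inter> A = cyc_of p j' \<inter> A"
    then have "j \<in> cyc_of p j'" using self_in_cyc_of by blast
    then show "cyc_of p j = cyc_of p j'"
      by (rule cyc_of_eq(1)[OF permutation_self_in_orbit[OF permutation]])
  qed
  then have "cyc_trace_prod \<rho> A (excursion_prod Z)
      = (\<Prod>C\<in>cyc_of p ` A. cyc_tr \<rho> (excursion_prod Z) (C \<inter> A))"
    unfolding cyc_trace_prod_def Cyc_\<rho> by (simp add: prod.reindex)
  also have "\<dots> = (\<Prod>C\<in>cyc_of p ` A. cyc_tr p Z C)"
    by (rule prod.cong) (auto simp flip: cyc_of_first_return simp: cyc_tr_first_return)
  finally show ?thesis .
qed

end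

section \<open>The reduction\<close>

lemma funpow_eq_while_in:
  fixes f g :: "'a \<Rightarrow> 'a"
  assumes "\<And>y. f y \<in> B \<Longrightarrow> g y = f y" "\<And>i. 0 < i \<Longrightarrow> i \<le> n \<Longrightarrow> (f ^^ i) x \<in> B"
  shows "(g ^^ n) x = (f ^^ n) x"
  using assms(2)
proof (induction n)
  case (Suc n)
  then have "(g ^^ n) x = (f ^^ n) x" by simp
  moreover have "f ((f ^^ n) x) \<in> B" using Suc.prems[of "Suc n"] by simp
  ultimately show ?case using assms(1) by simp
qed simp

locale cycle_reduction =
  fixes S :: "nat set" and \<sigma> \<tau> \<pi>' :: "nat \<Rightarrow> nat"
  assumes finite_S: "finite S" and \<sigma>_permutes: "\<sigma> permutes S" and \<tau>_permutes: "\<tau> permutes S"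
    and \<pi>'_permutes: "\<pi>' permutes (S - psupp \<tau>)"
begin

abbreviation "S' \<equiv> S - psupp \<tau>"
abbreviation "t \<equiv> \<tau> \<circ> \<sigma>"
abbreviation "p \<equiv> \<tau> \<circ> \<pi>' \<circ> \<sigma>"  (* = \<pi> \<circ> \<sigma>, by glued_eq_comp *)

lemma \<tau>_fixes: "k \<notin> psupp \<tau> \<Longrightarrow> \<tau> k = k"
  by (simp add: psupp_def)

lemma \<tau>_in_psupp_iff: "\<tau> k \<in> psupp \<tau> \<longleftrightarrow> k \<in> psupp \<tau>"
  using permutes_inj[OF \<tau>_permutes] by (auto simp: psupp_def inj_eq)

lemma \<pi>'_fixes: "k \<in> psupp \<tau> \<Longrightarrow> \<pi>' k = k"
  using permutes_not_in[OF \<pi>'_permutes] by simp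

lemma \<pi>'_notin_psupp: "k \<notin> psupp \<tau> \<Longrightarrow> \<pi>' k \<notin> psupp \<tau>"
  using permutes_in_image[OF \<pi>'_permutes] permutes_not_in[OF \<pi>'_permutes] by (cases "k \<in> S") auto

lemma glued_eq_comp: "(\<lambda>k. if k \<in> psupp \<tau> then \<tau> k else \<pi>' k) = \<tau> \<circ> \<pi>'"
  by (auto simp: \<pi>'_fixes \<tau>_fixes \<pi>'_notin_psupp)

lemma p_eq_t: "\<sigma> y \<in> psupp \<tau> \<Longrightarrow> p y = t y"
  by (simp add: \<pi>'_fixes)

lemma p_eq_\<pi>'_t: "\<sigma> y \<notin> psupp \<tau> \<Longrightarrow> p y = \<pi>' (t y)"
  by (simp add: \<tau>_fixes \<pi>'_notin_psupp)

lemma p_in_psupp_iff: "p y \<in> psupp \<tau> \<longleftrightarrow> \<sigma> y \<in> psupp \<tau>"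
  using \<pi>'_fixes \<pi>'_notin_psupp by (auto simp: \<tau>_in_psupp_iff)

lemma t_in_psupp_iff: "t y \<in> psupp \<tau> \<longleftrightarrow> \<sigma> y \<in> psupp \<tau>"
  by (simp add: \<tau>_in_psupp_iff)

lemma p_permutes: "p permutes S"
  using permutes_compose[OF \<sigma>_permutes permutes_compose[OF permutes_subset[OF \<pi>'_permutes] \<tau>_permutes]] by (auto simp: o_assoc)

lemma t_permutes: "t permutes S"
  by (rule permutes_compose[OF \<sigma>_permutes \<tau>_permutes])

lemma ret_spec:
  assumes "j \<notin> psupp \<tau>"
  shows ret_pos: "0 < ret \<sigma> \<tau> j" and funpow_t_ret_notin: "(t ^^ ret \<sigma> \<tau> j) j \<notin> psupp \<tau>"
proof -
  obtain n where "0 < n" "(t ^^ n) j = j"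
    using t_permutes finite_S permutation_self by (metis permutation_permutes)
  then have "1 \<le> n \<and> (t ^^ n) j \<notin> psupp \<tau>"
    using assms by simp
  then have "1 \<le> ret \<sigma> \<tau> j \<and> (t ^^ ret \<sigma> \<tau> j) j \<notin> psupp \<tau>"
    unfolding ret_def by (rule LeastI)
  then show "0 < ret \<sigma> \<tau> j" "(t ^^ ret \<sigma> \<tau> j) j \<notin> psupp \<tau>" by auto
qed

lemma funpow_t_before_ret: "0 < i \<Longrightarrow> i < ret \<sigma> \<tau> j \<Longrightarrow> (t ^^ i) j \<in> psupp \<tau>"
  using not_less_Least[of i "\<lambda>r. 1 \<le> r \<and> (t ^^ r) j \<notin> psupp \<tau>"] by (simp add: ret_def)

lemma funpow_p_before_ret: "i < ret \<sigma> \<tau> j \<Longrightarrow> (p ^^ i) j = (t ^^ i) j"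
  by (rule funpow_eq_while_in[where B = "psupp \<tau>"])
    (auto simp: t_in_psupp_iff p_eq_t simp del: o_apply intro: funpow_t_before_ret)

lemma funpow_p_ret:
  assumes "j \<notin> psupp \<tau>"
  shows "(p ^^ ret \<sigma> \<tau> j) j = \<pi>' ((t ^^ ret \<sigma> \<tau> j) j)"
proof -
  obtain k where k: "ret \<sigma> \<tau> j = Suc k" using ret_pos[OF assms] by (cases "ret \<sigma> \<tau> j") auto
  have "\<sigma> ((t ^^ k) j) \<notin> psupp \<tau>"
    using funpow_t_ret_notin[OF assms] k by (simp add: \<tau>_in_psupp_iff)
  have "(p ^^ Suc k) j = p ((t ^^ k) j)"
    using funpow_p_before_ret[of k j] k by (simp only: funpow.simps comp_apply)
  also have "\<dots> = \<pi>' ((t ^^ Suc k) j)"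
    using p_eq_\<pi>'_t[OF \<open>\<sigma> ((t ^^ k) j) \<notin> psupp \<tau>\<close>] by (simp only: funpow.simps comp_apply)
  finally show ?thesis using k by simp
qed

lemma pominus_funpow_ret: "pominus \<sigma> \<tau> j = (t ^^ ret \<sigma> \<tau> j) j" if "j \<notin> psupp \<tau>"
  using that by (simp add: pominus_def)

sublocale first_return p "\<pi>' \<circ> pominus \<sigma> \<tau>" S' "ret \<sigma> \<tau>"
proof
  show "permutation p"
    using p_permutes finite_S by (auto simp: permutation_permutes)
  fix j assume j: "j \<in> S'"
  then show "0 < ret \<sigma> \<tau> j" by (simp add: ret_pos)
  show "(p ^^ ret \<sigma> \<tau> j) j = (\<pi>' \<circ> pominus \<sigma> \<tau>) j"
    using j by (simp add: funpow_p_ret pominus_funpow_ret)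
  have "(t ^^ ret \<sigma> \<tau> j) j \<in> S'"
    using j funpow_t_ret_notin permutes_in_funpow_image[OF t_permutes] by simp
  then show "(\<pi>' \<circ> pominus \<sigma> \<tau>) j \<in> S'"
    using j permutes_in_image[OF \<pi>'_permutes] by (simp add: pominus_funpow_ret)
  fix i assume "0 < i" "i < ret \<sigma> \<tau> j"
  then show "(p ^^ i) j \<notin> S'"
    using funpow_p_before_ret funpow_t_before_ret by simp
qed

lemma reduction_eq_excursion_prod:
  "reduction S \<sigma> \<tau> Z j = mat (if j = Min S' then lam S \<sigma> \<tau> Z else 1) ** excursion_prod Z j"
proof -
  have "map (\<lambda>i. Z ((t ^^ i) j)) [0..<ret \<sigma> \<tau> j] = map Z (orbit_word p j (ret \<sigma> \<tau> j))"
    by (simp add: orbit_word_def funpow_p_before_ret)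
  then show ?thesis
    by (simp add: reduction_def excursion_prod_def if_distrib[of mat] del: o_apply)
qed

lemma funpow_p_eq_t_if_cyc_of_in_psupp:
  assumes "cyc_of p x \<subseteq> psupp \<tau> \<or> cyc_of t x \<subseteq> psupp \<tau>"
  shows "(p ^^ i) x = (t ^^ i) x"
  using assms
proof
  assume "cyc_of p x \<subseteq> psupp \<tau>"
  then show ?thesis
    by (intro funpow_eq_while_in[where B = "psupp \<tau>", symmetric])
      (auto simp: p_in_psupp_iff p_eq_t simp del: o_apply intro: subsetD[OF _ funpow_in_cyc_of])
next
  assume "cyc_of t x \<subseteq> psupp \<tau>"
  then show ?thesis
    by (intro funpow_eq_while_in[where B = "psupp \<tau>"])
      (auto simp: t_in_psupp_iff p_eq_t simp del: o_apply intro: subsetD[OF _ funpow_in_cyc_of])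
qed

lemma cyc_tr_p_eq_t:
  assumes "C \<in> Cyc t S" "C \<subseteq> psupp \<tau>"
  shows "cyc_tr p Z C = cyc_tr t Z C"
proof -
  obtain x where "x \<in> S" "C = cyc_of t x" using assms(1) by (auto simp: Cyc_def)
  have "Min C \<in> C"
    using \<open>C = cyc_of t x\<close> self_in_cyc_of cyc_of_subset_invariant[of S t x] \<open>x \<in> S\<close> finite_S
      permutes_in_image[OF t_permutes]
    by (metis Min_in empty_iff finite_subset)
  then have "cyc_of t (Min C) \<subseteq> psupp \<tau>"
    using cyc_of_subset assms(2) \<open>C = cyc_of t x\<close> by blast
  then show ?thesis
    by (simp add: cyc_tr_def cyc_word_def funpow_p_eq_t_if_cyc_of_in_psupp del: o_apply)
qed

lemma Cyc_p_eq_Un: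
  "Cyc p S = cyc_of p ` S' \<union> {C \<in> Cyc t S. C \<subseteq> psupp \<tau>}"
proof (intro equalityI subsetI)
  fix C assume "C \<in> Cyc p S"
  then obtain x where x: "x \<in> S" "C = cyc_of p x" by (auto simp: Cyc_def)
  show "C \<in> cyc_of p ` S' \<union> {C \<in> Cyc t S. C \<subseteq> psupp \<tau>}"
  proof (cases "C \<subseteq> psupp \<tau>")
    case True
    then have "C = cyc_of t x"
      unfolding x(2) by (intro cyc_of_cong funpow_p_eq_t_if_cyc_of_in_psupp) (simp add: x(2))
    with True x(1) show ?thesis by (auto simp: Cyc_def)
  next
    case False
    moreover have "C \<subseteq> S"
      using x cyc_of_subset_invariant[of S p x] permutes_in_image[OF p_permutes] by blast
    ultimately obtain j where "j \<in> S'" "j \<in> C" by blast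
    then have "C = cyc_of p j"
      using x cyc_of_eq(1) permutation_self_in_orbit[OF permutation] by metis
    with \<open>j \<in> S'\<close> show ?thesis by blast
  qed
next
  fix C assume "C \<in> cyc_of p ` S' \<union> {C \<in> Cyc t S. C \<subseteq> psupp \<tau>}"
  then show "C \<in> Cyc p S"
  proof
    assume "C \<in> {C \<in> Cyc t S. C \<subseteq> psupp \<tau>}"
    then obtain x where "x \<in> S" "C = cyc_of t x" "C \<subseteq> psupp \<tau>" by (auto simp: Cyc_def)
    moreover have "cyc_of p x = cyc_of t x"
      using \<open>C = cyc_of t x\<close> \<open>C \<subseteq> psupp \<tau>\<close>
      by (intro cyc_of_cong funpow_p_eq_t_if_cyc_of_in_psupp) simp
    ultimately have "C = cyc_of p x" by simp
    with \<open>x \<in> S\<close> show ?thesis by (auto simp: Cyc_def)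
  qed (auto simp: Cyc_def)
qed

lemma cyc_trace_prod_p_eq:
  "cyc_trace_prod p S Z = (\<Prod>C\<in>cyc_of p ` S'. cyc_tr p Z C) * lam S \<sigma> \<tau> Z"
proof -
  have "cyc_of p ` S' \<inter> {C \<in> Cyc t S. C \<subseteq> psupp \<tau>} = {}"
    using self_in_cyc_of by fastforce
  moreover have "finite (Cyc t S)" using finite_S by (simp add: Cyc_def)
  ultimately have "cyc_trace_prod p S Z
      = (\<Prod>C\<in>cyc_of p ` S'. cyc_tr p Z C) * (\<Prod>C\<in>{C \<in> Cyc t S. C \<subseteq> psupp \<tau>}. cyc_tr p Z C)"
    unfolding cyc_trace_prod_def Cyc_p_eq_Un using finite_S by (simp add: prod.union_disjoint)
  also have "(\<Prod>C\<in>{C \<in> Cyc t S. C \<subseteq> psupp \<tau>}. cyc_tr p Z C) = lam S \<sigma> \<tau> Z"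
    unfolding lam_def by (rule prod.cong) (auto simp: cyc_tr_p_eq_t)
  finally show ?thesis .
qed

lemma cyc_trace_prod_reduction:
  assumes "S' \<noteq> {}"
  shows "cyc_trace_prod (\<pi>' \<circ> pominus \<sigma> \<tau>) S' (reduction S \<sigma> \<tau> Z)
           = lam S \<sigma> \<tau> Z * (\<Prod>C\<in>cyc_of p ` S'. cyc_tr p Z C)"
proof -
  have "Min S' \<in> S'" by (rule Min_in) (use assms finite_S in auto)
  then have "(\<Prod>j\<in>S'. if j = Min S' then lam S \<sigma> \<tau> Z else 1) = lam S \<sigma> \<tau> Z"
    using finite_S by (simp add: prod.delta')
  moreover have "cyc_trace_prod (\<pi>' \<circ> pominus \<sigma> \<tau>) S'
      (\<lambda>j. mat (if j = Min S' then lam S \<sigma> \<tau> Z else 1) ** excursion_prod Z j)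
    = (\<Prod>j\<in>S'. if j = Min S' then lam S \<sigma> \<tau> Z else 1)
        * cyc_trace_prod (\<pi>' \<circ> pominus \<sigma> \<tau>) S' (excursion_prod Z)"
    by (rule cyc_trace_prod_mat_mult[OF periodic_first_return first_return_in])
  ultimately show ?thesis
    unfolding reduction_eq_excursion_prod by (simp add: cyc_trace_prod_first_return)
qed

end

theorem lemma3p19:
  fixes S :: "nat set" and \<sigma> \<tau> \<pi>' :: "nat \<Rightarrow> nat" and Z :: "nat \<Rightarrow> complex^'n^'n"
  assumes "finite S" and "\<sigma> permutes S" and "\<tau> permutes S"
    and "\<pi>' permutes (S - psupp \<tau>)"
  defines "\<pi> \<equiv> (\<lambda>k. if k \<in> psupp \<tau> then \<tau> k else \<pi>' k)"
  shows "(S - psupp \<tau> = {} \<longrightarrow>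
            cyc_trace_prod (\<pi> \<circ> \<sigma>) S Z = cyc_trace_prod (\<tau> \<circ> \<sigma>) S Z \<and>
            cyc_trace_prod (\<tau> \<circ> \<sigma>) S Z = lam S \<sigma> \<tau> Z)
       \<and> (S - psupp \<tau> \<noteq> {} \<longrightarrow>
            cyc_trace_prod (\<pi> \<circ> \<sigma>) S Z =
            cyc_trace_prod (\<pi>' \<circ> pominus \<sigma> \<tau>) (S - psupp \<tau>) (reduction S \<sigma> \<tau> Z))"
proof -
  interpret cycle_reduction S \<sigma> \<tau> \<pi>' using assms(1-4) by unfold_locales
  have \<pi>_\<sigma>: "\<pi> \<circ> \<sigma> = \<tau> \<circ> \<pi>' \<circ> \<sigma>" unfolding \<pi>_def glued_eq_comp ..
  show ?thesis
  proof (intro conjI impI)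
    assume "S - psupp \<tau> = {}"
    then have "\<pi>' = id" using assms(4) by (simp only: permutes_empty)
    then show "cyc_trace_prod (\<pi> \<circ> \<sigma>) S Z = cyc_trace_prod (\<tau> \<circ> \<sigma>) S Z"
      unfolding \<pi>_\<sigma> by simp
    then show "cyc_trace_prod (\<tau> \<circ> \<sigma>) S Z = lam S \<sigma> \<tau> Z"
      using cyc_trace_prod_p_eq[of Z] \<open>S - psupp \<tau> = {}\<close> by (simp add: \<pi>_\<sigma>)
  next
    assume "S - psupp \<tau> \<noteq> {}"
    then show "cyc_trace_prod (\<pi> \<circ> \<sigma>) S Z =
        cyc_trace_prod (\<pi>' \<circ> pominus \<sigma> \<tau>) (S - psupp \<tau>) (reduction S \<sigma> \<tau> Z)"
      by (simp add: \<pi>_\<sigma> cyc_trace_prod_p_eq cyc_trace_prod_reduction mult.commute del: o_apply)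
  qed
qed

end
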